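(* Fix reals $0<\varepsilon<1$ and $c\ge 12/\varepsilon$, and let $S$ be a set produced by the construction described in the context (with any choices allowed there). Then for all integers $m<n$ with $n$ sufficiently large and $Q_m$ defined, the number of collinear triples consisting of two points of $S\cap Q_m$ and one lattice point of $Q_n$ is at most $$\frac{8\cdot2^{m+n}}{c^{3}n^{2+2\varepsilon}m^{1+\varepsilon}}\cdot n.$$
   Context: Construction. Fix $0<\varepsilon<1$ and $c\ge 12/\varepsilon$. For each sufficiently large integer $n$ (say $n\ge n_0$), let $s_n=\left\lfloor\frac{2^n}{cn^{1+\varepsilon}}\right\rfloor$, $Y_n=\left\lfloor\frac{2^n}{n^{\varepsilon}}\right\rfloor$, and let $Q_n=[2^n,2^n+s_n]\times[Y_n-s_n,Y_n]$ be the axis-parallel square with side $s_n$ and top left corner $(2^n,Y_n)$. Let $p_n$ be the largest prime smaller than $s_n$. For integers $a,b$, let $\mathcal{P}_n(a,b)=\{(2^n+x,\;Y_n-y): x,y\in\{0,\dots,p_n-1\},\ y\equiv (x-a)^2+b \pmod{p_n}\}$, a translated copy of the modular parabola $y=(x-a)^2+b \bmod p_n$ in $Q_n$. The set $S\subseteq\mathbb{Z}^2$ is built iteratively for $n=n_0,n_0+1,\dots$: given the already selected points $S_{<n}=S\cap\bigcup_{m<n}Q_m$, choose parameters $(a_n,b_n)\in\{0,\dots,p_n-1\}^2$ minimizing the number of collinear triples formed by points of $\mathcal{P}_n(a_n,b_n)\cup S_{<n}$ that contain points of both $\mathcal{P}_n(a_n,b_n)$ and $S_{<n}$; delete from $\mathcal{P}_n=\mathcal{P}_n(a_n,b_n)$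 one point of each such triple, and add the remaining points of $\mathcal{P}_n$ to $S$. Thus $S\cap Q_n\subseteq\mathcal{P}_n$. *)

theory Defs
  imports "HOL-Computational_Algebra.Primes" Complex_Main
begin

type_synonym pt = "int \<times> int"

definition side :: "real \<Rightarrow> real \<Rightarrow> nat \<Rightarrow> int" where
  "side eps c n = \<lfloor>2 ^ n / (c * real n powr (1 + eps))\<rfloor>"

definition Yn :: "real \<Rightarrow> nat \<Rightarrow> int" where
  "Yn eps n = \<lfloor>2 ^ n / real n powr eps\<rfloor>"

definition pn :: "real \<Rightarrow> real \<Rightarrow> nat \<Rightarrow> int" where
  "pn eps c n = (GREATEST q. prime q \<and> q < side eps c n)"

definition Qlat :: "real \<Rightarrow> real \<Rightarrow> nat \<Rightarrow> pt set" where
  "Qlat eps c n = {(x, y). 2 ^ n \<le> x \<and> x \<le> 2 ^ n + side eps c n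
                    \<and> Yn eps n - side eps c n \<le> y \<and> y \<le> Yn eps n}"

definition parab :: "real \<Rightarrow> real \<Rightarrow> nat \<Rightarrow> int \<Rightarrow> int \<Rightarrow> pt set" where
  "parab eps c n a b = {(2 ^ n + x, Yn eps n - y) | x y.
      0 \<le> x \<and> x < pn eps c n \<and> 0 \<le> y \<and> y < pn eps c n \<and>
      y mod pn eps c n = ((x - a)^2 + b) mod pn eps c n}"

definition collinear3 :: "pt \<Rightarrow> pt \<Rightarrow> pt \<Rightarrow> bool" where
  "collinear3 p q r \<longleftrightarrow>
     (fst q - fst p) * (snd r - snd p) = (snd q - snd p) * (fst r - fst p)"

definition mixed_triples :: "pt set \<Rightarrow> pt set \<Rightarrow> pt set set" where
  "mixed_triples P A = {T. \<exists>p q r. T = {p, q, r} \<and> card T = 3 \<and> T \<subseteq> P \<union> A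
       \<and> collinear3 p q r \<and> T \<inter> P \<noteq> {} \<and> T \<inter> A \<noteq> {}}"

text \<open>S is a set produced by the construction started at n0 (with some admissible
  choices of the parameters a_n, b_n and of the deleted points f_n T).\<close>
definition construction :: "real \<Rightarrow> real \<Rightarrow> nat \<Rightarrow> pt set \<Rightarrow> bool" where
  "construction eps c n0 S \<longleftrightarrow>
     (\<forall>n\<ge>n0. 3 \<le> side eps c n) \<and>
     S \<subseteq> (\<Union>n\<in>{n0..}. Qlat eps c n) \<and>
     (\<exists>a b :: nat \<Rightarrow> int. \<exists>f :: nat \<Rightarrow> pt set \<Rightarrow> pt. \<forall>n\<ge>n0.
        let Slt = S \<inter> (\<Union>k\<in>{n0..<n}. Qlat eps c k);
            P = parab eps c n (a n) (b n);
            M = mixed_triples P Slt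
        in 0 \<le> a n \<and> a n < pn eps c n \<and> 0 \<le> b n \<and> b n < pn eps c n
           \<and> (\<forall>a' b'. 0 \<le> a' \<and> a' < pn eps c n \<and> 0 \<le> b' \<and> b' < pn eps c n \<longrightarrow>
                 card M \<le> card (mixed_triples (parab eps c n a' b') Slt))
           \<and> (\<forall>T\<in>M. f n T \<in> T \<inter> P)
           \<and> S \<inter> Qlat eps c n = P - f n ` M)"

definition cross_triples :: "real \<Rightarrow> real \<Rightarrow> pt set \<Rightarrow> nat \<Rightarrow> nat \<Rightarrow> pt set set" where
  "cross_triples eps c S m n = {T. \<exists>p q r. T = {p, q, r} \<and> p \<noteq> q \<and>
       p \<in> S \<inter> Qlat eps c m \<and> q \<in> S \<inter> Qlat eps c m \<and> r \<in> Qlat eps c n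
       \<and> collinear3 p q r}"

end

theory Submission
  imports Defs "HOL-Real_Asymp.Real_Asymp"
begin

text \<open>
  The points of S in Q_m lie on a modular parabola modulo an odd prime, so they have distinct
  x-coordinates and, as in a Sidon set, each displacement q - p between two of them occurs at most
  once. A collinear triple {p, q, r} with r in Q_n is therefore determined by the displacement
  (dx, dy) = q - p and by r. The point r lies on the line through p with direction (dx, dy), so
  its x-coordinate runs through a single residue class modulo dx / gcd(dx, dy) in an interval of
  length s_n: there are at most (s_n + s_m) gcd(dx, dy) / dx choices. Since Q_n lies far to the
  right of and above Q_m, the slope dy/dx lies in a short window; grouping the displacements by
  their primitive direction (a, b) bounds the count by s_m (s_n + s_m) times the sum of 1/a^2 over
  a thin cone, which is estimated through harmonic sums. For large n the growth of s_n and Y_n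
  turns this into the stated bound.
\<close>

section \<open>Counting lattice points and harmonic sums\<close>

lemma int_interval_eq_Icc:
  fixes \<alpha> \<beta> :: real
  shows "{k::int. \<alpha> \<le> of_int k \<and> of_int k \<le> \<beta>} = {\<lceil>\<alpha>\<rceil>..\<lfloor>\<beta>\<rfloor>}"
  by (auto simp: ceiling_le_iff le_floor_iff)

lemma finite_int_interval:
  fixes \<alpha> \<beta> :: real
  shows "finite {k::int. \<alpha> \<le> of_int k \<and> of_int k \<le> \<beta>}"
  by (simp add: int_interval_eq_Icc)

lemma card_int_interval_le:
  fixes \<alpha> \<beta> :: real
  shows "real (card {k::int. \<alpha> \<le> of_int k \<and> of_int k \<le> \<beta>}) \<le> max 0 (\<beta> - \<alpha> + 1)"
proof -
  have "real (card {k::int. \<alpha> \<le> of_int k \<and> of_int k \<le> \<beta>}) = max 0 (of_int (\<lfloor>\<beta>\<rfloor> - \<lceil>\<alpha>\<rceil> + 1))"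
    by (simp add: int_interval_eq_Icc)
  also have "\<dots> \<le> max 0 (\<beta> - \<alpha> + 1)"
    using of_int_floor_le[of \<beta>] le_of_int_ceiling[of \<alpha>] by (intro max.mono) linarith+
  finally show ?thesis .
qed

lemma card_congruent_interval_le:
  fixes lo t a x0 :: int
  assumes "1 \<le> a" "0 \<le> t"
  shows "real (card {x. lo \<le> x \<and> x \<le> lo + t \<and> a dvd (x - x0)}) \<le> of_int t / of_int a + 1"
proof -
  define K where "K = {k::int. real_of_int (lo - x0) / of_int a \<le> of_int k \<and> of_int k \<le> real_of_int (lo + t - x0) / of_int a}"
  have "{x. lo \<le> x \<and> x \<le> lo + t \<and> a dvd (x - x0)} \<subseteq> (\<lambda>k. x0 + a * k) ` K"
  proof
    fix x assume x: "x \<in> {x. lo \<le> x \<and> x \<le> lo + t \<and> a dvd (x - x0)}"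
    then obtain k where k: "x - x0 = a * k" by (auto elim: dvdE)
    have "real_of_int (lo - x0) \<le> of_int a * of_int k" "of_int a * of_int k \<le> real_of_int (lo + t - x0)"
      using x k by (simp_all add: of_int_mult[symmetric] del: of_int_mult)
    then have "k \<in> K" using assms by (simp add: K_def divide_le_eq le_divide_eq mult.commute)
    then show "x \<in> (\<lambda>k. x0 + a * k) ` K" using k by (intro image_eqI[of _ _ k]) auto
  qed
  moreover have "finite K" unfolding K_def by (rule finite_int_interval)
  ultimately have "card {x. lo \<le> x \<and> x \<le> lo + t \<and> a dvd (x - x0)} \<le> card K"
    using card_mono[of "(\<lambda>k. x0 + a * k) ` K"] card_image_le[of K] by (meson finite_imageI order_trans)
  also have "real (card K) \<le> max 0 (of_int (lo + t - x0) / of_int a - of_int (lo - x0) / of_int a + 1)"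
    unfolding K_def by (rule card_int_interval_le)
  also have "\<dots> = of_int t / of_int a + 1"
    using assms by (simp add: diff_divide_distrib[symmetric])
  finally show ?thesis by simp
qed

lemma Icc_1_int_eq_image: "{1..B::int} = int ` {1..nat B}"
  using image_int_atLeastAtMost[of 1 "nat B"] by (cases "0 \<le> B") auto

lemma harmonic_sum_pow2_le: "(\<Sum>b=1..(2::nat) ^ k. 1 / real b) \<le> real k + 1"
proof (induction k)
  case 0 then show ?case by simp
next
  case (Suc k)
  have split: "(\<Sum>b=1..(2::nat) ^ Suc k. 1 / real b)
      = (\<Sum>b=1..2 ^ k. 1 / real b) + (\<Sum>b=2 ^ k + 1..2 ^ k + 2 ^ k. 1 / real b)"
    using sum.ub_add_nat[of 1 "2 ^ k" "\<lambda>b. 1 / real b" "2 ^ k"] by (simp add: mult_2)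
  have "(\<Sum>b=2 ^ k + 1..2 ^ k + 2 ^ k. 1 / real b) \<le> (\<Sum>b=(2::nat) ^ k + 1..2 ^ k + 2 ^ k. 1 / 2 ^ k)"
    by (intro sum_mono) (auto simp: field_simps)
  also have "\<dots> = 1" by simp
  finally show ?case using split Suc by simp
qed

lemma harmonic_sum_int_le:
  fixes B :: int
  assumes "B \<le> 2 ^ k"
  shows "(\<Sum>b\<in>{1..B}. 1 / real_of_int b) \<le> real k + 1"
proof -
  have "(\<Sum>b\<in>{1..B}. 1 / real_of_int b) = (\<Sum>b\<in>{1..nat B}. 1 / real b)"
    by (simp add: Icc_1_int_eq_image sum.reindex)
  also have "\<dots> \<le> (\<Sum>b\<in>{1..(2::nat) ^ k}. 1 / real b)"
    using assms by (intro sum_mono2) (auto simp: nat_le_iff)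
  also have "\<dots> \<le> real k + 1" by (rule harmonic_sum_pow2_le)
  finally show ?thesis .
qed

lemma inverse_square_sum_nat_le: "1 \<le> B \<Longrightarrow> (\<Sum>b=1..B. 1 / (real b)\<^sup>2) \<le> 2 - 1 / real B"
proof (induction B rule: dec_induct)
  case base then show ?case by simp
next
  case (step B)
  have "1 / (real B + 1)\<^sup>2 + 1 / (real B + 1) \<le> 1 / real B"
    using step by (simp add: divide_simps power2_eq_square) (simp add: algebra_simps)
  then show ?case using step by (simp add: add.commute)
qed

lemma inverse_square_sum_int_le:
  fixes B :: int
  shows "(\<Sum>b\<in>{1..B}. 1 / (real_of_int b)\<^sup>2) \<le> 2"
proof -
  have "(\<Sum>b\<in>{1..B}. 1 / (real_of_int b)\<^sup>2) = (\<Sum>b\<in>{1..nat B}. 1 / (real b)\<^sup>2)"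
    by (simp add: Icc_1_int_eq_image sum.reindex)
  also have "\<dots> \<le> 2"
  proof (cases "1 \<le> nat B")
    case True
    then show ?thesis using inverse_square_sum_nat_le[OF True] by (smt (verit) of_nat_0_le_iff divide_nonneg_nonneg)
  qed simp
  finally show ?thesis .
qed

section \<open>Sums over a cone of directions\<close>

text \<open>The displacements of two points of a square of side s that are collinear with a point at
  horizontal distance in [Xl, Xh] and vertical distance in [Yl, Yh] from them: the slope dy/dx lies
  in [Yl/Xh, Yh/Xl].\<close>
definition cone_directions :: "int \<Rightarrow> int \<Rightarrow> int \<Rightarrow> int \<Rightarrow> int \<Rightarrow> (int \<times> int) set" where
  "cone_directions s Xl Xh Yl Yh =
     {(dx, dy). 1 \<le> dx \<and> dx \<le> s \<and> 1 \<le> dy \<and> dy \<le> s \<and> dy * Xl \<le> dx * Yh \<and> dx * Yl \<le> dy * Xh}"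

lemma finite_cone_directions: "finite (cone_directions s Xl Xh Yl Yh)"
  by (rule finite_subset[of _ "{1..s} \<times> {1..s}"]) (auto simp: cone_directions_def)

lemma cone_directions_fst_bounds:
  assumes "(dx, b) \<in> cone_directions s Xl Xh Yl Yh" "0 < Yl" "0 < Yh"
  shows "real_of_int b * of_int Xl / of_int Yh \<le> of_int dx" "of_int dx \<le> real_of_int b * of_int Xh / of_int Yl"
proof -
  have "b * Xl \<le> dx * Yh" "dx * Yl \<le> b * Xh"
    using assms(1) by (auto simp: cone_directions_def mult.commute)
  then have "real_of_int b * of_int Xl \<le> of_int dx * of_int Yh" "of_int dx * of_int Yl \<le> real_of_int b * of_int Xh"
    by (simp_all add: of_int_mult[symmetric] del: of_int_mult)
  then show "real_of_int b * of_int Xl / of_int Yh \<le> of_int dx" "of_int dx \<le> real_of_int b * of_int Xh / of_int Yl"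
    using assms(2,3) by (simp_all add: divide_le_eq le_divide_eq)
qed

lemma cone_column_sum_le:
  fixes s Xl Xh Yl Yh b :: int
  assumes "0 < Xl" "0 < Yl" "Xl \<le> Xh" "Yl \<le> Yh" "1 \<le> b"
  shows "(\<Sum>d\<in>{d \<in> cone_directions s Xl Xh Yl Yh. snd d = b}. 1 / (real_of_int (fst d))\<^sup>2)
     \<le> (of_int b * (of_int Xh / of_int Yl - of_int Xl / of_int Yh) + 1) * (of_int Yh / (of_int b * of_int Xl))\<^sup>2"
proof -
  define C where "C = {d \<in> cone_directions s Xl Xh Yl Yh. snd d = b}"
  define lo where "lo = real_of_int b * of_int Xl / of_int Yh"
  define hi where "hi = real_of_int b * of_int Xh / of_int Yl"
  have "0 < lo" using assms by (simp add: lo_def)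
  have fst_bounds: "lo \<le> of_int (fst d) \<and> of_int (fst d) \<le> hi" if "d \<in> C" for d
    using that cone_directions_fst_bounds[of "fst d" b] assms by (auto simp: C_def lo_def hi_def)
  have "lo \<le> hi"
    using assms by (simp add: lo_def hi_def frac_le mult_left_mono flip: times_divide_eq_right)
  have "inj_on fst C" by (rule inj_onI) (auto simp: C_def prod_eq_iff)
  then have "card C = card (fst ` C)" by (simp add: card_image)
  also have "\<dots> \<le> card {k::int. lo \<le> of_int k \<and> of_int k \<le> hi}"
    using fst_bounds by (intro card_mono finite_int_interval) auto
  finally have "real (card C) \<le> max 0 (hi - lo + 1)"
    using card_int_interval_le[of lo hi] by linarith
  also have "\<dots> = of_int b * (of_int Xh / of_int Yl - of_int Xl / of_int Yh) + 1"
    using \<open>lo \<le> hi\<close> by (simp add: lo_def hi_def right_diff_distrib)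
  finally have card_C: "real (card C) \<le> of_int b * (of_int Xh / of_int Yl - of_int Xl / of_int Yh) + 1" .
  have term_le: "1 / (real_of_int (fst d))\<^sup>2 \<le> (1 / lo)\<^sup>2" if "d \<in> C" for d
  proof -
    have "(1 / real_of_int (fst d))\<^sup>2 \<le> (1 / lo)\<^sup>2"
      using fst_bounds[OF that] \<open>0 < lo\<close> by (intro power_mono divide_left_mono) auto
    then show ?thesis by (simp add: power_one_over)
  qed
  have "(\<Sum>d\<in>C. 1 / (real_of_int (fst d))\<^sup>2) \<le> real (card C) * (1 / lo)\<^sup>2"
    using term_le by (rule sum_bounded_above)
  also have "\<dots> \<le> (of_int b * (of_int Xh / of_int Yl - of_int Xl / of_int Yh) + 1) * (1 / lo)\<^sup>2"
    by (rule mult_right_mono[OF card_C]) simp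
  finally show ?thesis by (simp add: C_def lo_def power_divide)
qed

lemma cone_inverse_square_sum_le:
  fixes s Xl Xh Yl Yh :: int
  assumes "0 < Xl" "0 < Yl" "Xl \<le> Xh" "Yl \<le> Yh" "s \<le> 2 ^ k"
  shows "(\<Sum>d\<in>cone_directions s Xl Xh Yl Yh. 1 / (real_of_int (fst d))\<^sup>2)
     \<le> (of_int Yh / of_int Xl)\<^sup>2 * ((of_int Xh / of_int Yl - of_int Xl / of_int Yh) * (real k + 1) + 2)"
proof -
  define D where "D = cone_directions s Xl Xh Yl Yh"
  define K where "K = (real_of_int Yh / of_int Xl)\<^sup>2"
  define \<Delta> where "\<Delta> = real_of_int Xh / of_int Yl - of_int Xl / of_int Yh"
  have "0 \<le> \<Delta>" using assms by (simp add: \<Delta>_def frac_le)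
  have "snd ` D \<subseteq> {1..s}" by (auto simp: D_def cone_directions_def)
  then have "(\<Sum>d\<in>D. 1 / (real_of_int (fst d))\<^sup>2)
      = (\<Sum>b\<in>{1..s}. \<Sum>d\<in>{d \<in> D. snd d = b}. 1 / (real_of_int (fst d))\<^sup>2)"
    using finite_cone_directions unfolding D_def by (intro sum.group[symmetric]) auto
  also have "\<dots> \<le> (\<Sum>b\<in>{1..s}. (of_int b * \<Delta> + 1) * (of_int Yh / (of_int b * of_int Xl))\<^sup>2)"
    unfolding D_def \<Delta>_def using assms by (intro sum_mono cone_column_sum_le) auto
  also have "\<dots> = (\<Sum>b\<in>{1..s}. K * \<Delta> * (1 / of_int b) + K * (1 / (of_int b)\<^sup>2))"
    by (intro sum.cong refl) (use assms in \<open>auto simp: K_def field_simps power2_eq_square\<close>)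
  also have "\<dots> = K * \<Delta> * (\<Sum>b\<in>{1..s}. 1 / of_int b) + K * (\<Sum>b\<in>{1..s}. 1 / (of_int b)\<^sup>2)"
    by (simp add: sum.distrib sum_distrib_left)
  also have "\<dots> \<le> K * \<Delta> * (real k + 1) + K * 2"
    using harmonic_sum_int_le[OF assms(5)] inverse_square_sum_int_le[of s] \<open>0 \<le> \<Delta>\<close>
    by (intro add_mono mult_left_mono) (auto simp: K_def)
  finally show ?thesis unfolding D_def K_def \<Delta>_def by (simp add: algebra_simps)
qed

lemma cone_directions_primitive:
  assumes "(dx, dy) \<in> cone_directions s Xl Xh Yl Yh"
  defines "g \<equiv> gcd dx dy"
  shows "(dx div g, dy div g) \<in> cone_directions s Xl Xh Yl Yh" "1 \<le> g" "g \<le> s div (dx div g)"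
proof -
  define a where "a = dx div g"
  define b where "b = dy div g"
  have h: "1 \<le> dx" "dx \<le> s" "1 \<le> dy" "dy \<le> s" "dy * Xl \<le> dx * Yh" "dx * Yl \<le> dy * Xh"
    using assms(1) by (auto simp: cone_directions_def)
  then have "0 < g" by (simp add: g_def)
  then show "1 \<le> g" by simp
  have dx: "dx = g * a" and dy: "dy = g * b" by (simp_all add: a_def b_def g_def)
  have "0 < g * a" "0 < g * b" using h by (simp_all add: dx[symmetric] dy[symmetric])
  then have "1 \<le> a" "1 \<le> b" using \<open>1 \<le> g\<close> by (simp_all add: zero_less_mult_iff)
  have "a \<le> dx" "b \<le> dy" using \<open>1 \<le> g\<close> \<open>1 \<le> a\<close> \<open>1 \<le> b\<close> by (simp_all add: dx dy)
  have "g * (b * Xl) \<le> g * (a * Yh)" "g * (a * Yl) \<le> g * (b * Xh)"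
    using h by (simp_all add: dx dy mult.assoc)
  then have "b * Xl \<le> a * Yh" "a * Yl \<le> b * Xh" using \<open>1 \<le> g\<close> by simp_all
  then show "(dx div g, dy div g) \<in> cone_directions s Xl Xh Yl Yh"
    using h \<open>1 \<le> a\<close> \<open>1 \<le> b\<close> \<open>a \<le> dx\<close> \<open>b \<le> dy\<close>
    by (auto simp: cone_directions_def a_def[symmetric] b_def[symmetric])
  show "g \<le> s div (dx div g)"
    using h \<open>1 \<le> a\<close> by (simp add: dx div_pos_geq mult.commute zdiv_mono1[of "a * g" s a, simplified] flip: a_def)
qed

text \<open>A direction g (a, b) with (a, b) primitive has weight gcd / dx = 1 / a, and g takes at most
  s / a values.\<close>
lemma cone_gcd_sum_le:
  fixes s Xl Xh Yl Yh :: int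
  shows "(\<Sum>d\<in>cone_directions s Xl Xh Yl Yh. real_of_int (gcd (fst d) (snd d)) / of_int (fst d))
     \<le> of_int s * (\<Sum>d\<in>cone_directions s Xl Xh Yl Yh. 1 / (real_of_int (fst d))\<^sup>2)"
proof -
  define D where "D = cone_directions s Xl Xh Yl Yh"
  define \<psi> where "\<psi> = (\<lambda>d::int \<times> int. let g = gcd (fst d) (snd d) in ((fst d div g, snd d div g), g))"
  define T where "T = (SIGMA e:D. {1..s div fst e})"
  have "finite T" unfolding T_def D_def by (simp add: finite_cone_directions)
  have "\<psi> ` D \<subseteq> T"
    using cone_directions_primitive by (force simp: D_def T_def \<psi>_def Let_def)
  have weight: "real_of_int (gcd (fst d) (snd d)) / of_int (fst d) = 1 / of_int (fst (fst (\<psi> d)))" for d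
    by (simp add: \<psi>_def Let_def real_of_int_div)
  have "inj_on \<psi> D"
  proof (rule inj_onI)
    fix d e assume "\<psi> d = \<psi> e"
    then show "d = e" unfolding \<psi>_def Let_def
      by (metis (no_types, lifting) dvd_div_mult_self gcd_dvd1 gcd_dvd2 prod.collapse prod.inject)
  qed
  have "(\<Sum>d\<in>D. real_of_int (gcd (fst d) (snd d)) / of_int (fst d)) = (\<Sum>d\<in>D. 1 / of_int (fst (fst (\<psi> d))))"
    by (simp only: weight)
  also have "\<dots> = (\<Sum>z\<in>\<psi> ` D. 1 / of_int (fst (fst z)))"
    using \<open>inj_on \<psi> D\<close> by (simp add: sum.reindex)
  also have "\<dots> \<le> (\<Sum>z\<in>T. 1 / of_int (fst (fst z)))"
  proof (rule sum_mono2[OF \<open>finite T\<close> \<open>\<psi> ` D \<subseteq> T\<close>])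
    show "0 \<le> 1 / real_of_int (fst (fst z))" if "z \<in> T - \<psi> ` D" for z
      using that by (auto simp: T_def D_def cone_directions_def)
  qed
  also have "\<dots> = (\<Sum>e\<in>D. \<Sum>g\<in>{1..s div fst e}. 1 / of_int (fst e))"
    unfolding T_def by (subst sum.Sigma) (auto simp: D_def finite_cone_directions split_def)
  also have "\<dots> \<le> (\<Sum>e\<in>D. of_int s * (1 / (real_of_int (fst e))\<^sup>2))"
  proof (intro sum_mono)
    fix e assume "e \<in> D"
    then have "1 \<le> fst e" "fst e \<le> s" by (auto simp: D_def cone_directions_def)
    then have "(\<Sum>g\<in>{1..s div fst e}. 1 / real_of_int (fst e)) = of_int (s div fst e) * (1 / of_int (fst e))"
      by (simp add: pos_imp_zdiv_nonneg_iff)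
    also have "\<dots> \<le> (of_int s / of_int (fst e)) * (1 / of_int (fst e))"
      using \<open>1 \<le> fst e\<close> by (intro mult_right_mono) (auto simp: real_of_int_div4)
    finally show "(\<Sum>g\<in>{1..s div fst e}. 1 / real_of_int (fst e)) \<le> of_int s * (1 / (real_of_int (fst e))\<^sup>2)"
      by (simp add: power2_eq_square)
  qed
  finally show ?thesis unfolding D_def by (simp add: sum_distrib_left)
qed

section \<open>Collinear triples between two lattice squares\<close>

definition lattice_square :: "int \<Rightarrow> int \<Rightarrow> int \<Rightarrow> pt set" where
  "lattice_square x0 y0 s = {(x, y). x0 \<le> x \<and> x \<le> x0 + s \<and> y0 - s \<le> y \<and> y \<le> y0}"

lemma finite_lattice_square: "finite (lattice_square x0 y0 s)"
  by (rule finite_subset[of _ "{x0..x0 + s} \<times> {y0 - s..y0}"]) (auto simp: lattice_square_def)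

definition displacement :: "pt \<Rightarrow> pt \<Rightarrow> int \<times> int" where
  "displacement p q = (fst q - fst p, snd q - snd p)"

lemma collinear3_swap: "collinear3 q p r \<longleftrightarrow> collinear3 p q r"
  unfolding collinear3_def by algebra

lemma reduced_denominator_dvd:
  fixes dx dy X Y :: int
  assumes "dx * Y = dy * X" "1 \<le> dx"
  shows "dx div gcd dx dy dvd X"
proof -
  define g where "g = gcd dx dy"
  have g: "0 < g" using assms by (simp add: g_def)
  have "g * ((dx div g) * Y) = g * ((dy div g) * X)"
    using assms(1) unfolding g_def by (simp add: mult.assoc[symmetric])
  then have "(dx div g) * Y = (dy div g) * X" using g by simp
  moreover have "coprime (dx div g) (dy div g)" unfolding g_def using assms by (intro div_gcd_coprime) auto
  ultimately show ?thesis unfolding g_def[symmetric]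
    by (metis coprime_dvd_mult_right_iff dvd_triv_left)
qed

text \<open>The x-coordinates of the lattice points on the line form a single residue class modulo
  dx / gcd dx dy.\<close>
lemma card_line_points_le:
  fixes dx dy x1 t :: int and p :: pt and R :: "pt set"
  assumes dx: "1 \<le> dx" and "0 \<le> t" and R: "\<And>r. r \<in> R \<Longrightarrow> x1 \<le> fst r \<and> fst r \<le> x1 + t"
  shows "real (card {r \<in> R. dx * (snd r - snd p) = dy * (fst r - fst p)})
     \<le> of_int t * of_int (gcd dx dy) / of_int dx + 1"
proof -
  define g where "g = gcd dx dy"
  define a where "a = dx div g"
  define L where "L = {r \<in> R. dx * (snd r - snd p) = dy * (fst r - fst p)}"
  have g: "0 < g" using dx by (simp add: g_def)
  have dx_eq: "dx = g * a" by (simp add: a_def g_def)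
  have "0 < g * a" using dx by (simp add: dx_eq[symmetric])
  then have "1 \<le> a" using g by (simp add: zero_less_mult_iff)
  have "inj_on fst L"
  proof (rule inj_onI)
    fix r r' assume "r \<in> L" "r' \<in> L" "fst r = fst r'"
    then have "dx * (snd r - snd p) = dx * (snd r' - snd p)" by (simp add: L_def)
    then show "r = r'" using dx \<open>fst r = fst r'\<close> by (simp add: prod_eq_iff)
  qed
  then have "card L = card (fst ` L)" by (simp add: card_image)
  also have "\<dots> \<le> card {x. x1 \<le> x \<and> x \<le> x1 + t \<and> a dvd (x - fst p)}"
  proof (rule card_mono)
    show "finite {x. x1 \<le> x \<and> x \<le> x1 + t \<and> a dvd (x - fst p)}"
      by (rule finite_subset[of _ "{x1..x1 + t}"]) auto
    show "fst ` L \<subseteq> {x. x1 \<le> x \<and> x \<le> x1 + t \<and> a dvd (x - fst p)}"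
      using R reduced_denominator_dvd[OF _ dx] by (auto simp: L_def a_def g_def)
  qed
  finally have "real (card L) \<le> of_int t / of_int a + 1"
    using card_congruent_interval_le[OF \<open>1 \<le> a\<close> \<open>0 \<le> t\<close>, of x1 "fst p"] by linarith
  also have "of_int t / of_int a = of_int t * of_int g / real_of_int dx"
    using g by (simp add: dx_eq)
  finally show ?thesis by (simp add: L_def g_def)
qed

lemma card_collinear_points_le:
  fixes p q :: pt and R :: "pt set" and s t x1 :: int
  assumes "fst p < fst q" "fst q - fst p \<le> s" "0 \<le> t"
    and "\<And>r. r \<in> R \<Longrightarrow> x1 \<le> fst r \<and> fst r \<le> x1 + t"
  shows "real (card {r \<in> R. collinear3 p q r})
     \<le> of_int (t + s) * (of_int (gcd (fst q - fst p) (snd q - snd p)) / of_int (fst q - fst p))"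
proof -
  define dx where "dx = fst q - fst p"
  define g where "g = gcd dx (snd q - snd p)"
  have dx: "1 \<le> dx" "dx \<le> s" using assms by (simp_all add: dx_def)
  have g: "0 < g" using dx by (simp add: g_def)
  have "real (card {r \<in> R. collinear3 p q r}) \<le> of_int t * of_int g / of_int dx + 1"
    unfolding collinear3_def g_def dx_def using assms dx(1) unfolding dx_def by (intro card_line_points_le) auto
  also have "\<dots> \<le> of_int (t + s) * (of_int g / of_int dx)"
  proof -
    have "dx \<le> s * g" using dx g by (smt (verit) mult_le_cancel_left1)
    then have "1 \<le> real_of_int s * (of_int g / of_int dx)"
      using dx by (simp add: field_simps flip: of_int_mult)
    then show ?thesis unfolding of_int_add distrib_right times_divide_eq_right add_divide_distrib by linarith
  qed
  finally show ?thesis by (simp add: g_def dx_def)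
qed

lemma displacement_in_cone_directions:
  assumes "p \<in> lattice_square x0 y0 s" "q \<in> lattice_square x0 y0 s" "fst p < fst q"
    and "r \<in> lattice_square x1 y1 t" "collinear3 p q r"
    and "0 < x1 - x0 - s" "0 < y1 - y0 - t"
  shows "displacement p q \<in> cone_directions s (x1 - x0 - s) (x1 - x0 + t) (y1 - y0 - t) (y1 - y0 + s)"
proof -
  define dx where "dx = fst q - fst p"
  define dy where "dy = snd q - snd p"
  define X where "X = fst r - fst p"
  define Y where "Y = snd r - snd p"
  have on_line: "dx * Y = dy * X" using assms(5) by (simp add: collinear3_def dx_def dy_def X_def Y_def)
  have dx: "1 \<le> dx" "dx \<le> s" and "dy \<le> s"
    using assms(1-3) by (auto simp: lattice_square_def dx_def dy_def)
  have XY: "x1 - x0 - s \<le> X" "X \<le> x1 - x0 + t" "y1 - y0 - t \<le> Y" "Y \<le> y1 - y0 + s"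
    using assms(1,4) by (auto simp: lattice_square_def X_def Y_def)
  have "0 < dx * Y" using dx XY assms(7) by (simp add: zero_less_mult_iff)
  then have "0 < dy" using on_line XY assms(6) by (simp add: zero_less_mult_iff)
  have "dy * (x1 - x0 - s) \<le> dy * X" using \<open>0 < dy\<close> XY by (intro mult_left_mono) auto
  also have "\<dots> = dx * Y" using on_line by simp
  also have "\<dots> \<le> dx * (y1 - y0 + s)" using dx XY by (intro mult_left_mono) auto
  finally have "dy * (x1 - x0 - s) \<le> dx * (y1 - y0 + s)" .
  moreover have "dx * (y1 - y0 - t) \<le> dy * (x1 - x0 + t)"
  proof -
    have "dx * (y1 - y0 - t) \<le> dx * Y" using dx XY by (intro mult_left_mono) auto
    also have "\<dots> = dy * X" using on_line by simp
    also have "\<dots> \<le> dy * (x1 - x0 + t)" using \<open>0 < dy\<close> XY by (intro mult_left_mono) auto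
    finally show ?thesis .
  qed
  ultimately show ?thesis using dx \<open>dy \<le> s\<close> \<open>0 < dy\<close>
    by (simp add: displacement_def cone_directions_def dx_def dy_def)
qed

definition collinear_triples :: "pt set \<Rightarrow> pt set \<Rightarrow> pt set set" where
  "collinear_triples A R =
     {T. \<exists>p q r. T = {p, q, r} \<and> p \<noteq> q \<and> p \<in> A \<and> q \<in> A \<and> r \<in> R \<and> collinear3 p q r}"

definition increasing_pairs :: "pt set \<Rightarrow> (pt \<times> pt) set" where
  "increasing_pairs A = {(p, q). p \<in> A \<and> q \<in> A \<and> fst p < fst q}"

lemma finite_increasing_pairs: "finite A \<Longrightarrow> finite (increasing_pairs A)"
  by (rule finite_subset[of _ "A \<times> A"]) (auto simp: increasing_pairs_def)

lemma card_collinear_triples_le_sum: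
  fixes A R :: "pt set"
  assumes "finite A" "finite R" "inj_on fst A"
  shows "card (collinear_triples A R) \<le> (\<Sum>(p, q)\<in>increasing_pairs A. card {r \<in> R. collinear3 p q r})"
proof -
  define P where "P = increasing_pairs A"
  define L where "L = (\<lambda>(p, q). {r \<in> R. collinear3 p q r})"
  have "finite P" using assms(1) by (simp add: P_def finite_increasing_pairs)
  have fin_L: "\<forall>pq\<in>P. finite (L pq)" using assms(2) by (auto simp: L_def)
  have "collinear_triples A R \<subseteq> (\<lambda>((p, q), r). {p, q, r}) ` Sigma P L"
  proof
    fix T assume "T \<in> collinear_triples A R"
    then obtain p q r where h: "p \<noteq> q" "p \<in> A" "q \<in> A" "r \<in> R" "collinear3 p q r" and T: "T = {p, q, r}"
      unfolding collinear_triples_def by blast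
    have "fst p \<noteq> fst q" using h assms(3) by (auto dest: inj_onD)
    then consider "fst p < fst q" | "fst q < fst p" by linarith
    then show "T \<in> (\<lambda>((p, q), r). {p, q, r}) ` Sigma P L"
    proof cases
      case 1
      then have "((p, q), r) \<in> Sigma P L" using h by (simp add: P_def L_def increasing_pairs_def)
      then show ?thesis using T by (intro image_eqI[of _ _ "((p, q), r)"]) auto
    next
      case 2
      then have "((q, p), r) \<in> Sigma P L" using h collinear3_swap by (simp add: P_def L_def increasing_pairs_def)
      moreover have "{p, q, r} = {q, p, r}" by auto
      ultimately show ?thesis using T by (intro image_eqI[of _ _ "((q, p), r)"]) auto
    qed
  qed
  then have "card (collinear_triples A R) \<le> card (Sigma P L)"
    using \<open>finite P\<close> fin_L by (intro order.trans[OF card_mono card_image_le]) (auto intro!: finite_imageI)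
  also have "\<dots> = (\<Sum>pq\<in>P. card (L pq))" using \<open>finite P\<close> fin_L by simp
  finally show ?thesis by (simp add: P_def L_def split_def)
qed

lemma card_collinear_triples_le_cone_sum:
  fixes A :: "pt set"
  assumes A: "A \<subseteq> lattice_square x0 y0 s" "inj_on fst A"
    and distinct_displacements: "inj_on (case_prod displacement) (increasing_pairs A)"
    and gaps: "0 < x1 - x0 - s" "0 < y1 - y0 - t" and "0 \<le> t" "0 \<le> s"
  shows "real (card (collinear_triples A (lattice_square x1 y1 t)))
     \<le> of_int (t + s) * (\<Sum>d\<in>cone_directions s (x1 - x0 - s) (x1 - x0 + t) (y1 - y0 - t) (y1 - y0 + s).
                            of_int (gcd (fst d) (snd d)) / of_int (fst d))"
proof -
  define R where "R = lattice_square x1 y1 t"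
  define D where "D = cone_directions s (x1 - x0 - s) (x1 - x0 + t) (y1 - y0 - t) (y1 - y0 + s)"
  define P where "P = increasing_pairs A"
  define P' where "P' = {(p, q) \<in> P. \<exists>r\<in>R. collinear3 p q r}"
  define w where "w = (\<lambda>d::int \<times> int. of_int (t + s) * (real_of_int (gcd (fst d) (snd d)) / of_int (fst d)))"
  have "finite A" using A(1) finite_lattice_square by (rule finite_subset)
  then have "finite P" by (simp add: P_def finite_increasing_pairs)
  have "P' \<subseteq> P" by (auto simp: P'_def)
  have "real (card (collinear_triples A R)) \<le> (\<Sum>(p, q)\<in>P. real (card {r \<in> R. collinear3 p q r}))"
    using card_collinear_triples_le_sum[OF \<open>finite A\<close> finite_lattice_square A(2), of x1 y1 t]
    unfolding R_def P_def by (simp add: split_def flip: of_nat_sum)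
  also have "\<dots> = (\<Sum>(p, q)\<in>P'. real (card {r \<in> R. collinear3 p q r}))"
    using \<open>finite P\<close> \<open>P' \<subseteq> P\<close> by (intro sum.mono_neutral_right) (auto simp: P'_def card_gt_0_iff)
  also have "\<dots> \<le> (\<Sum>(p, q)\<in>P'. w (displacement p q))"
  proof (intro sum_mono, clarify)
    fix p q assume "(p, q) \<in> P'"
    then have "p \<in> lattice_square x0 y0 s" "q \<in> lattice_square x0 y0 s" "fst p < fst q"
      using A(1) by (auto simp: P'_def P_def increasing_pairs_def)
    then show "real (card {r \<in> R. collinear3 p q r}) \<le> w (displacement p q)"
      unfolding w_def displacement_def fst_conv snd_conv using \<open>0 \<le> t\<close>
      by (intro card_collinear_points_le[of _ _ _ _ _ x1]) (auto simp: lattice_square_def R_def)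
  qed
  also have "\<dots> = (\<Sum>d\<in>case_prod displacement ` P'. w d)"
    using inj_on_subset[OF distinct_displacements \<open>P' \<subseteq> P\<close>[unfolded P_def]]
    by (simp add: sum.reindex split_def)
  also have "\<dots> \<le> (\<Sum>d\<in>D. w d)"
  proof (rule sum_mono2)
    show "finite D" by (simp add: D_def finite_cone_directions)
    show "case_prod displacement ` P' \<subseteq> D"
      using A(1) gaps
      by (auto simp: P'_def P_def D_def R_def increasing_pairs_def intro!: displacement_in_cone_directions)
    show "0 \<le> w d" if "d \<in> D - case_prod displacement ` P'" for d
      using that \<open>0 \<le> t\<close> \<open>0 \<le> s\<close> by (auto simp: w_def D_def cone_directions_def)
  qed
  finally show ?thesis by (simp add: w_def R_def D_def sum_distrib_left)
qed

text \<open>(t + s) s times the bound of \<open>cone_inverse_square_sum_le\<close>, for a square of side t whose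
  top-left corner is displaced by (X, Y) from that of a square of side s.\<close>
definition collinearity_bound :: "real \<Rightarrow> real \<Rightarrow> real \<Rightarrow> real \<Rightarrow> real \<Rightarrow> real" where
  "collinearity_bound s t X Y k =
     (t + s) * s * ((Y + s) / (X - s))\<^sup>2 * (((X + t) / (Y - t) - (X - s) / (Y + s)) * (k + 1) + 2)"

lemma card_collinear_triples_le:
  fixes A :: "pt set"
  assumes "A \<subseteq> lattice_square x0 y0 s" "inj_on fst A" "inj_on (case_prod displacement) (increasing_pairs A)"
    and "0 < x1 - x0 - s" "0 < y1 - y0 - t" "0 \<le> t" "0 \<le> s" "s \<le> 2 ^ k"
  shows "real (card (collinear_triples A (lattice_square x1 y1 t)))
     \<le> collinearity_bound (of_int s) (of_int t) (of_int (x1 - x0)) (of_int (y1 - y0)) (real k)"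
proof -
  define D where "D = cone_directions s (x1 - x0 - s) (x1 - x0 + t) (y1 - y0 - t) (y1 - y0 + s)"
  have "real (card (collinear_triples A (lattice_square x1 y1 t)))
      \<le> of_int (t + s) * (\<Sum>d\<in>D. of_int (gcd (fst d) (snd d)) / of_int (fst d))"
    unfolding D_def using assms(1-7) by (rule card_collinear_triples_le_cone_sum)
  also have "\<dots> \<le> of_int (t + s) * (of_int s * (\<Sum>d\<in>D. 1 / (real_of_int (fst d))\<^sup>2))"
    unfolding D_def using assms by (intro mult_left_mono cone_gcd_sum_le) auto
  also have "\<dots> \<le> of_int (t + s) * (of_int s * ((of_int (y1 - y0 + s) / of_int (x1 - x0 - s))\<^sup>2 *
      ((of_int (x1 - x0 + t) / of_int (y1 - y0 - t) - of_int (x1 - x0 - s) / of_int (y1 - y0 + s)) * (real k + 1) + 2)))"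
    unfolding D_def using assms by (intro mult_left_mono cone_inverse_square_sum_le) auto
  finally show ?thesis by (simp only: collinearity_bound_def of_int_add of_int_diff mult.assoc)
qed

section \<open>The numerical estimate\<close>

text \<open>In the application P = 2^n, th = n^eps, k = n, and u, sm, s' are the real side lengths
  of Q_n, Q_m and Q_(n-1).\<close>
context
  fixes s t X Y sm s' P th c k u :: real
  assumes t: "0 \<le> t" "t \<le> u" and s: "0 \<le> s" "s \<le> sm" "sm \<le> s'"
    and s'_u: "s' \<le> 51 / 100 * u" and s'_P: "s' \<le> P / 200"
    and X: "P / 2 \<le> X" and Y_upper: "Y + s \<le> P / th" and Y_lower: "100 * s' + 101 * u \<le> Y"
    and th: "100 * c \<le> th" and c: "12 \<le> c" and k: "1 \<le> k" "k + 1 \<le> 101 / 100 * k"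
    and u: "u = P / (c * k * th)" and P: "0 < P"
begin

lemma collinearity_bound_shape:
  shows "0 < th" "0 < u" "t + s \<le> 151 / 100 * u" "99 / 200 * P \<le> X - s" "0 < Y - t"
    and "(Y + s) / (Y - t) \<le> 101 / 100" "(X + Y) / (X - s) \<le> 26 / 25" "0 \<le> X + Y"
    and "(Y + s) / (X - s) \<le> 203 / 100 / th"
proof -
  show "0 < th" using th c by linarith
  then show "0 < u" using P c k by (simp add: u)
  then show "t + s \<le> 151 / 100 * u" "0 < Y - t" using t s s'_u Y_lower by linarith+
  show Xs: "99 / 200 * P \<le> X - s" using s s'_P X by linarith
  have "Y + s \<le> 101 / 100 * (Y - t)"
    unfolding right_diff_distrib using t s s'_u Y_lower by linarith
  then show "(Y + s) / (Y - t) \<le> 101 / 100" using \<open>0 < Y - t\<close> by (simp add: divide_le_eq)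
  have "P / th \<le> P / 100" using th c P by (intro divide_left_mono) auto
  then have "X + Y \<le> 26 / 25 * (X - s)"
    unfolding right_diff_distrib using Y_upper X s s'_P by linarith
  then show "(X + Y) / (X - s) \<le> 26 / 25" using Xs P by (simp add: divide_le_eq)
  show "0 \<le> X + Y" using X Y_lower P s s'_u \<open>0 < u\<close> by linarith
  have "(Y + s) / (X - s) \<le> (P / th) / (99 / 200 * P)"
    using Y_upper Xs \<open>0 < th\<close> P s \<open>0 < Y - t\<close> t by (intro frac_le) auto
  also have "\<dots> \<le> 203 / 100 / th" using P \<open>0 < th\<close> by (simp add: field_simps)
  finally show "(Y + s) / (X - s) \<le> 203 / 100 / th" .
qed

lemma collinearity_main_term_le:
  "(t + s) * s * ((Y + s) / (X - s))\<^sup>2 * (((X + t) / (Y - t) - (X - s) / (Y + s)) * (k + 1))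
     \<le> 5 * (u * sm / (c * th))"
proof -
  note shape = collinearity_bound_shape
  have "0 < X - s" "0 < Y + s" using shape(4,5) P t s by linarith+
  have "(X + t) / (Y - t) - (X - s) / (Y + s) = ((X + t) * (Y + s) - (X - s) * (Y - t)) / ((Y - t) * (Y + s))"
    using shape(5) \<open>0 < Y + s\<close> by (simp add: diff_frac_eq)
  also have "(X + t) * (Y + s) - (X - s) * (Y - t) = (t + s) * (X + Y)" by algebra
  finally have "(t + s) * s * ((Y + s) / (X - s))\<^sup>2 * (((X + t) / (Y - t) - (X - s) / (Y + s)) * (k + 1))
      = (t + s) * s * ((Y + s) / (X - s))\<^sup>2 * ((t + s) * (X + Y) / ((Y - t) * (Y + s)) * (k + 1))"
    by simp
  also have "\<dots> = (t + s) * (t + s) * s * (k + 1) * ((Y + s) / (Y - t)) * ((X + Y) / (X - s)) * (1 / (X - s))"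
  proof -
    have "(t + s) * s * (b / a)\<^sup>2 * ((t + s) * e / (d * b) * (k + 1))
        = (t + s) * (t + s) * s * (k + 1) * (b / d) * (e / a) * (1 / a)"
      if "a \<noteq> 0" "b \<noteq> 0" "d \<noteq> 0" for a b d e :: real
      using that by (simp add: field_simps power2_eq_square)
    then show ?thesis using shape(5) \<open>0 < X - s\<close> \<open>0 < Y + s\<close> by simp
  qed
  also have "\<dots> \<le> (151 / 100 * u) * (151 / 100 * u) * sm * (101 / 100 * k) * (101 / 100) * (26 / 25)
                     * (200 / 99 / P)"
  proof -
    have "1 / (X - s) \<le> 200 / 99 / P" using shape(4) P by (simp add: field_simps)
    then show ?thesis
      using shape(3,5,6,7,8) \<open>0 < X - s\<close> \<open>0 < Y + s\<close> t s k
      by (intro mult_mono) (auto intro!: mult_nonneg_nonneg divide_nonneg_nonneg)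
  qed
  also have "\<dots> = (151 / 100)\<^sup>2 * (101 / 100)\<^sup>2 * (26 / 25) * (200 / 99) * (u * sm * (u * k / P))"
    by (simp add: field_simps power2_eq_square)
  also have "u * k / P = 1 / (c * th)" using P k shape(1) c by (simp add: u field_simps)
  also have "(151 / 100)\<^sup>2 * (101 / 100)\<^sup>2 * (26 / 25) * (200 / 99) * (u * sm * (1 / (c * th)))
      \<le> 5 * (u * sm * (1 / (c * th)))"
    using shape(1,2) s c by (intro mult_right_mono) (auto simp: power2_eq_square)
  finally show ?thesis by simp
qed

lemma collinearity_error_term_le: "(t + s) * s * ((Y + s) / (X - s))\<^sup>2 * 2 \<le> 1 / 5 * (u * sm / (c * th))"
proof -
  note shape = collinearity_bound_shape
  have "0 \<le> (Y + s) / (X - s)" using shape(4,5) P t s by (auto intro: divide_nonneg_nonneg)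
  then have "(t + s) * s * ((Y + s) / (X - s))\<^sup>2 * 2 \<le> (151 / 100 * u) * sm * (203 / 100 / th)\<^sup>2 * 2"
    using shape(3,9) t s by (intro mult_mono power_mono) auto
  also have "\<dots> = 2 * (151 / 100) * (203 / 100)\<^sup>2 * (u * sm / (th * th))"
    by (simp add: field_simps power2_eq_square)
  also have "\<dots> \<le> 2 * (151 / 100) * (203 / 100)\<^sup>2 * (u * sm / (100 * c * th))"
    using th shape(1,2) s c by (intro mult_left_mono divide_left_mono mult_right_mono) auto
  also have "\<dots> \<le> 1 / 5 * (u * sm / (c * th))"
    using shape(1,2) s c by (simp add: field_simps power2_eq_square)
  finally show ?thesis .
qed

lemma collinearity_bound_le: "collinearity_bound s t X Y k \<le> 8 * u * sm / (c * th)"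
proof -
  have "collinearity_bound s t X Y k
      = (t + s) * s * ((Y + s) / (X - s))\<^sup>2 * (((X + t) / (Y - t) - (X - s) / (Y + s)) * (k + 1))
        + (t + s) * s * ((Y + s) / (X - s))\<^sup>2 * 2"
    by (simp add: collinearity_bound_def distrib_left)
  also have "\<dots> \<le> 5 * (u * sm / (c * th)) + 1 / 5 * (u * sm / (c * th))"
    using collinearity_main_term_le collinearity_error_term_le by (rule add_mono)
  also have "\<dots> \<le> 8 * u * sm / (c * th)"
    using collinearity_bound_shape(1,2) s c by (simp add: field_simps)
  finally show ?thesis .
qed

end


section \<open>The modular parabola\<close>

lemma pn_prime_bounds:
  assumes "4 \<le> side eps c n"
  shows "prime (pn eps c n)" "3 \<le> pn eps c n" "pn eps c n < side eps c n"
proof -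
  define Q where "Q = {q::int. prime q \<and> q < side eps c n}"
  have "finite Q"
    by (rule finite_subset[of _ "{0..side eps c n}"]) (auto simp: Q_def dest: prime_gt_0_int)
  have "3 \<in> Q" using assms by (simp add: Q_def)
  have "Max Q \<in> Q" using \<open>finite Q\<close> \<open>3 \<in> Q\<close> by (intro Max_in) auto
  moreover have "q \<le> Max Q" if "q \<in> Q" for q using \<open>finite Q\<close> that by simp
  ultimately have "pn eps c n = Max Q"
    unfolding pn_def by (intro Greatest_equality) (auto simp: Q_def)
  then show "prime (pn eps c n)" "3 \<le> pn eps c n" "pn eps c n < side eps c n"
    using \<open>Max Q \<in> Q\<close> \<open>3 \<in> Q\<close> \<open>finite Q\<close> by (auto simp: Q_def)
qed

lemma eq_if_dvd_diff_less:
  fixes P u v :: int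
  assumes "P dvd u - v" "0 \<le> u" "u < P" "0 \<le> v" "v < P"
  shows "u = v"
  using assms by (metis mod_eq_dvd_iff mod_pos_pos_trivial)

lemma square_difference_dvd_imp_eq:
  fixes P a d x x' :: int
  assumes "prime P" "3 \<le> P" "0 < d" "d < P" "0 \<le> x" "x < P" "0 \<le> x'" "x' < P"
    and "P dvd ((x + d - a)\<^sup>2 - (x - a)\<^sup>2) - ((x' + d - a)\<^sup>2 - (x' - a)\<^sup>2)"
  shows "x = x'"
proof -
  have "((x + d - a)\<^sup>2 - (x - a)\<^sup>2) - ((x' + d - a)\<^sup>2 - (x' - a)\<^sup>2) = 2 * d * (x - x')"
    by algebra
  then have "P dvd 2 \<or> P dvd d \<or> P dvd x - x'"
    using assms(1,9) by (simp add: prime_dvd_mult_iff)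
  moreover have "\<not> P dvd 2" using assms(2) zdvd_imp_le[of P 2] by auto
  moreover have "\<not> P dvd d" using assms(3,4) zdvd_imp_le[of P d] by auto
  ultimately show ?thesis using assms(5-8) by (blast intro: eq_if_dvd_diff_less)
qed

lemma parab_memE:
  assumes "z \<in> parab eps c n a b"
  obtains x y where "z = (2 ^ n + x, Yn eps n - y)" "0 \<le> x" "x < pn eps c n" "0 \<le> y" "y < pn eps c n"
    "pn eps c n dvd y - ((x - a)\<^sup>2 + b)"
  using assms unfolding parab_def by (auto simp: mod_eq_dvd_iff)

lemma inj_on_fst_parab: "inj_on fst (parab eps c n a b)"
proof (rule inj_onI)
  fix p q assume p: "p \<in> parab eps c n a b" and q: "q \<in> parab eps c n a b" and "fst p = fst q"
  obtain x y where p_eq: "p = (2 ^ n + x, Yn eps n - y)" and y: "0 \<le> y" "y < pn eps c n"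
    and y_dvd: "pn eps c n dvd y - ((x - a)\<^sup>2 + b)" using p by (rule parab_memE)
  obtain x' y' where q_eq: "q = (2 ^ n + x', Yn eps n - y')" and y': "0 \<le> y'" "y' < pn eps c n"
    and y'_dvd: "pn eps c n dvd y' - ((x' - a)\<^sup>2 + b)" using q by (rule parab_memE)
  have "x = x'" using \<open>fst p = fst q\<close> p_eq q_eq by simp
  have "pn eps c n dvd (y - ((x - a)\<^sup>2 + b)) - (y' - ((x' - a)\<^sup>2 + b))"
    using y_dvd y'_dvd by (rule dvd_diff)
  then have "y = y'" using eq_if_dvd_diff_less[OF _ y y'] \<open>x = x'\<close> by simp
  then show "p = q" using p_eq q_eq \<open>x = x'\<close> by simp
qed

lemma parab_distinct_displacements:
  assumes "prime (pn eps c n)" "3 \<le> pn eps c n"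
  shows "inj_on (case_prod displacement) (increasing_pairs (parab eps c n a b))"
proof (rule inj_onI)
  define P where "P = pn eps c n"
  fix z z'
  assume z: "z \<in> increasing_pairs (parab eps c n a b)" and z': "z' \<in> increasing_pairs (parab eps c n a b)"
    and z_disp: "case_prod displacement z = case_prod displacement z'"
  obtain p q p' q' where zz: "z = (p, q)" "z' = (p', q')" by (cases z, cases z')
  have mem: "p \<in> parab eps c n a b" "q \<in> parab eps c n a b" "p' \<in> parab eps c n a b" "q' \<in> parab eps c n a b"
    and "fst p < fst q" and disp: "displacement p q = displacement p' q'"
    using z z' z_disp by (simp_all add: zz increasing_pairs_def)
  obtain x1 y1 where p: "p = (2 ^ n + x1, Yn eps n - y1)" "0 \<le> x1" "x1 < P" "0 \<le> y1" "y1 < P"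
    "P dvd y1 - ((x1 - a)\<^sup>2 + b)" using mem(1) unfolding P_def by (rule parab_memE)
  obtain x2 y2 where q: "q = (2 ^ n + x2, Yn eps n - y2)" "0 \<le> x2" "x2 < P" "0 \<le> y2" "y2 < P"
    "P dvd y2 - ((x2 - a)\<^sup>2 + b)" using mem(2) unfolding P_def by (rule parab_memE)
  obtain x3 y3 where p': "p' = (2 ^ n + x3, Yn eps n - y3)" "0 \<le> x3" "x3 < P" "0 \<le> y3" "y3 < P"
    "P dvd y3 - ((x3 - a)\<^sup>2 + b)" using mem(3) unfolding P_def by (rule parab_memE)
  obtain x4 y4 where q': "q' = (2 ^ n + x4, Yn eps n - y4)" "0 \<le> x4" "x4 < P" "0 \<le> y4" "y4 < P"
    "P dvd y4 - ((x4 - a)\<^sup>2 + b)" using mem(4) unfolding P_def by (rule parab_memE)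
  define d where "d = x2 - x1"
  have d: "0 < d" "d < P" using \<open>fst p < fst q\<close> p q by (auto simp: d_def)
  have x2: "x2 = x1 + d" and x4: "x4 = x3 + d" and y: "y1 - y2 = y3 - y4"
    using disp p q p' q' by (auto simp: displacement_def d_def)
  have "P dvd ((y1 - ((x1 - a)\<^sup>2 + b)) - (y2 - ((x2 - a)\<^sup>2 + b)))
              - ((y3 - ((x3 - a)\<^sup>2 + b)) - (y4 - ((x4 - a)\<^sup>2 + b)))"
    by (rule dvd_diff[OF dvd_diff[OF p(6) q(6)] dvd_diff[OF p'(6) q'(6)]])
  also have "((y1 - ((x1 - a)\<^sup>2 + b)) - (y2 - ((x2 - a)\<^sup>2 + b)))
              - ((y3 - ((x3 - a)\<^sup>2 + b)) - (y4 - ((x4 - a)\<^sup>2 + b)))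
      = ((x1 + d - a)\<^sup>2 - (x1 - a)\<^sup>2) - ((x3 + d - a)\<^sup>2 - (x3 - a)\<^sup>2)"
    using y unfolding x2 x4 by algebra
  finally have "x1 = x3"
    using assms d p(2,3) p'(2,3) unfolding P_def[symmetric] by (intro square_difference_dvd_imp_eq)
  moreover have "y1 = y3"
  proof (rule eq_if_dvd_diff_less[of P])
    show "P dvd y1 - y3" using dvd_diff[OF p(6) p'(6)] \<open>x1 = x3\<close> by simp
  qed (use p p' in auto)
  ultimately have "p = p'" using p p' by simp
  then show "z = z'" using disp by (simp add: zz displacement_def prod_eq_iff)
qed

section \<open>The construction\<close>

definition side_real :: "real \<Rightarrow> real \<Rightarrow> nat \<Rightarrow> real" where
  "side_real eps c n = 2 ^ n / (c * real n powr (1 + eps))"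

lemma side_eq_floor: "side eps c n = \<lfloor>side_real eps c n\<rfloor>"
  by (simp add: side_def side_real_def)

lemma two_pow_div_mono:
  fixes f :: "nat \<Rightarrow> real"
  assumes pos: "\<And>k. K \<le> k \<Longrightarrow> 0 < f k" and growth: "\<And>k. K \<le> k \<Longrightarrow> f (Suc k) \<le> 2 * f k"
    and "K \<le> k" "k \<le> l"
  shows "2 ^ k / f k \<le> 2 ^ l / f l"
  using \<open>k \<le> l\<close>
proof (induction l rule: dec_induct)
  case (step l)
  then have "K \<le> l" using \<open>K \<le> k\<close> by simp
  have "2 ^ l / f l = 2 ^ Suc l / (2 * f l)" by simp
  also have "\<dots> \<le> 2 ^ Suc l / f (Suc l)"
    using pos[of "Suc l"] growth[OF \<open>K \<le> l\<close>] \<open>K \<le> l\<close> by (intro divide_left_mono) auto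
  finally show ?case using step.IH by linarith
qed simp

lemma Suc_powr_le_double:
  fixes e :: real
  assumes "1 \<le> k" "(1 + 1 / real k) powr e \<le> 2"
  shows "real (Suc k) powr e \<le> 2 * real k powr e"
proof -
  have "real (Suc k) = (1 + 1 / real k) * real k" using assms(1) by (simp add: field_simps)
  then have "real (Suc k) powr e = (1 + 1 / real k) powr e * real k powr e" by (simp add: powr_mult)
  then show ?thesis using assms(2) by (simp add: mult_right_mono)
qed

lemma side_real_mono:
  assumes "0 < eps" "eps < 1" "0 < c" "3 \<le> k" "k \<le> l"
  shows "side_real eps c k \<le> side_real eps c l"
  unfolding side_real_def
proof (rule two_pow_div_mono[of 3])
  fix k :: nat assume "3 \<le> k"
  show "0 < c * real k powr (1 + eps)" using \<open>3 \<le> k\<close> assms by simp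
  have "(1 + 1 / real k) powr (1 + eps) \<le> (1 + 1 / real k) powr 2" using assms by (intro powr_mono) auto
  also have "\<dots> = (1 + 1 / real k)\<^sup>2" by (simp add: powr_numeral)
  also have "\<dots> \<le> (1 + 1 / 3)\<^sup>2" using \<open>3 \<le> k\<close> by (intro power_mono) (auto simp: field_simps)
  also have "\<dots> \<le> 2" by (simp add: power2_eq_square)
  finally have "real (Suc k) powr (1 + eps) \<le> 2 * real k powr (1 + eps)"
    using \<open>3 \<le> k\<close> by (intro Suc_powr_le_double) auto
  then show "c * real (Suc k) powr (1 + eps) \<le> 2 * (c * real k powr (1 + eps))" using assms by simp
qed (use assms in auto)

lemma height_real_mono:
  assumes "0 \<le> eps" "eps \<le> 1" "1 \<le> k" "k \<le> l"
  shows "2 ^ k / real k powr eps \<le> 2 ^ l / real l powr eps"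
proof (rule two_pow_div_mono[of 1])
  fix k :: nat assume "1 \<le> k"
  show "0 < real k powr eps" using \<open>1 \<le> k\<close> by simp
  have "(1 + 1 / real k) powr eps \<le> (1 + 1 / real k) powr 1" using assms by (intro powr_mono) auto
  also have "\<dots> \<le> 2" using \<open>1 \<le> k\<close> by simp
  finally show "real (Suc k) powr eps \<le> 2 * real k powr eps"
    using \<open>1 \<le> k\<close> by (intro Suc_powr_le_double) auto
qed (use assms in auto)

lemma eventually_side_ge_4:
  assumes "0 < eps" "eps < 1" "0 < c"
  shows "eventually (\<lambda>n. 4 \<le> side eps c n) at_top"
proof -
  have "eventually (\<lambda>n::nat. 4 \<le> 2 ^ n / (c * real n powr (1 + eps))) at_top" using assms by real_asymp
  then show ?thesis by eventually_elim (simp add: side_def le_floor_iff)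
qed

text \<open>The inequalities behind "n sufficiently large"; the fourth puts Q_n high enough above every
  Q_m with m < n.\<close>
definition large_scale :: "real \<Rightarrow> real \<Rightarrow> nat \<Rightarrow> bool" where
  "large_scale eps c n \<longleftrightarrow>
     100 * c \<le> real n powr eps \<and>
     side_real eps c (n - 1) \<le> 51 / 100 * side_real eps c n \<and>
     side_real eps c (n - 1) \<le> 2 ^ n / 200 \<and>
     100 * side_real eps c (n - 1) + 101 * side_real eps c n
       \<le> 2 ^ n / real n powr eps - 1 - 2 ^ (n - 1) / real (n - 1) powr eps \<and>
     real n + 1 \<le> 101 / 100 * real n"

lemma eventually_large_scale:
  assumes "0 < eps" "eps < 1" "0 < c"
  shows "eventually (large_scale eps c) at_top"
proof -
  have "eventually (\<lambda>n::nat. 100 * c \<le> real n powr eps) at_top" using assms by real_asymp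
  moreover have "eventually (\<lambda>n::nat. 2 ^ (n - 1) / (c * real (n - 1) powr (1 + eps))
      \<le> 51 / 100 * (2 ^ n / (c * real n powr (1 + eps)))) at_top"
    using assms by real_asymp
  moreover have "eventually (\<lambda>n::nat. 2 ^ (n - 1) / (c * real (n - 1) powr (1 + eps)) \<le> 2 ^ n / 200) at_top"
    using assms by real_asymp
  moreover have "eventually (\<lambda>n::nat.
      100 * (2 ^ (n - 1) / (c * real (n - 1) powr (1 + eps))) + 101 * (2 ^ n / (c * real n powr (1 + eps)))
        \<le> 2 ^ n / real n powr eps - 1 - 2 ^ (n - 1) / real (n - 1) powr eps) at_top"
    using assms by real_asymp
  moreover have "eventually (\<lambda>n::nat. real n + 1 \<le> 101 / 100 * real n) at_top" by real_asymp
  ultimately show ?thesis unfolding large_scale_def side_real_def by eventually_elim blast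
qed

lemma Qlat_eq_lattice_square: "Qlat eps c n = lattice_square (2 ^ n) (Yn eps n) (side eps c n)"
  by (simp add: Qlat_def lattice_square_def)

lemma construction_slice_subset_parab:
  assumes "construction eps c n0 S" "n0 \<le> m"
  obtains a b where "S \<inter> Qlat eps c m \<subseteq> parab eps c m a b"
proof -
  from assms(1) have "\<exists>a b. \<forall>n\<ge>n0. S \<inter> Qlat eps c n \<subseteq> parab eps c n (a n) (b n)"
    unfolding construction_def Let_def by (elim conjE exE) (metis Diff_subset)
  then show ?thesis using assms(2) that by blast
qed

lemma side_le_height:
  assumes "0 < eps" "12 \<le> c" "1 \<le> m"
  shows "side eps c m \<le> Yn eps m"
proof -
  have "real m powr eps \<le> c * (real m * real m powr eps)"
    using assms by (intro order.trans[OF _ mult_mono[of 1 c "real m powr eps"]]) auto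
  then have "real m powr eps \<le> c * real m powr (1 + eps)"
    using assms by (simp add: powr_add)
  then have "2 ^ m / (c * real m powr (1 + eps)) \<le> 2 ^ m / real m powr eps"
    using assms by (intro divide_left_mono) auto
  then show ?thesis unfolding side_def Yn_def by (rule floor_mono)
qed

lemma horizontal_offset_ge:
  assumes "m < n"
  shows "2 ^ n / 2 \<le> real_of_int ((2::int) ^ n - 2 ^ m)"
proof -
  have "(2::real) ^ m \<le> 2 ^ (n - 1)" using assms by (intro power_increasing) auto
  moreover have "(2::real) ^ n = 2 * 2 ^ (n - 1)" using assms by (simp flip: power_Suc)
  ultimately show ?thesis by simp
qed

lemma vertical_offset_le:
  assumes "0 < eps" "12 \<le> c" "1 \<le> m"
  shows "real_of_int (Yn eps n - Yn eps m + side eps c m) \<le> 2 ^ n / real n powr eps"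
proof -
  have "real_of_int (Yn eps n) \<le> 2 ^ n / real n powr eps" unfolding Yn_def by (rule of_int_floor_le)
  then show ?thesis using side_le_height[OF assms] by simp
qed

lemma vertical_offset_ge:
  assumes "0 < eps" "eps < 1" "1 \<le> m" "m < n" "large_scale eps c n"
  shows "100 * side_real eps c (n - 1) + 101 * side_real eps c n \<le> of_int (Yn eps n - Yn eps m)"
proof -
  have "real_of_int (Yn eps m) \<le> 2 ^ m / real m powr eps" unfolding Yn_def by (rule of_int_floor_le)
  also have "\<dots> \<le> 2 ^ (n - 1) / real (n - 1) powr eps"
    using assms by (intro height_real_mono) auto
  finally have "real_of_int (Yn eps m) \<le> 2 ^ (n - 1) / real (n - 1) powr eps" .
  moreover have "2 ^ n / real n powr eps - 1 \<le> real_of_int (Yn eps n)"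
    unfolding Yn_def by linarith
  ultimately show ?thesis using assms(5) unfolding large_scale_def by linarith
qed

lemma card_cross_triples_le_collinearity_bound:
  assumes "4 \<le> side eps c m" "0 \<le> side eps c n" "S \<inter> Qlat eps c m \<subseteq> parab eps c m a b"
    and "side eps c m < 2 ^ n - 2 ^ m" "side eps c n < Yn eps n - Yn eps m" "side eps c m \<le> 2 ^ n"
  shows "real (card (cross_triples eps c S m n))
           \<le> collinearity_bound (of_int (side eps c m)) (of_int (side eps c n))
                (of_int (2 ^ n - 2 ^ m)) (of_int (Yn eps n - Yn eps m)) (real n)"
proof -
  define A where "A = S \<inter> Qlat eps c m"
  have "cross_triples eps c S m n = collinear_triples A (lattice_square (2 ^ n) (Yn eps n) (side eps c n))"
    by (simp add: cross_triples_def collinear_triples_def A_def Qlat_eq_lattice_square)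
  moreover have "A \<subseteq> lattice_square (2 ^ m) (Yn eps m) (side eps c m)"
    by (auto simp: A_def Qlat_eq_lattice_square)
  moreover have "inj_on fst A" using inj_on_subset[OF inj_on_fst_parab assms(3)] by (simp add: A_def)
  moreover have "inj_on (case_prod displacement) (increasing_pairs A)"
    using assms(3) pn_prime_bounds[OF assms(1)]
    by (intro inj_on_subset[OF parab_distinct_displacements]) (auto simp: A_def increasing_pairs_def)
  ultimately show ?thesis
    using assms(1,2,4-6) card_collinear_triples_le[of A "2 ^ m" "Yn eps m" "side eps c m" "2 ^ n" "Yn eps n"]
    by simp
qed

lemma card_cross_triples_le:
  assumes eps: "0 < eps" "eps < 1" and c: "12 \<le> c" and mn: "3 \<le> m" "m < n"
    and sides: "4 \<le> side eps c m" "0 \<le> side eps c n"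
    and slice: "S \<inter> Qlat eps c m \<subseteq> parab eps c m a b"
    and large: "large_scale eps c n"
  shows "real (card (cross_triples eps c S m n))
           \<le> 8 * side_real eps c n * side_real eps c m / (c * real n powr eps)"
proof -
  define s where "s = side eps c m"
  define t where "t = side eps c n"
  define X where "X = (2::int) ^ n - 2 ^ m"
  define Y where "Y = Yn eps n - Yn eps m"
  define P :: real where "P = 2 ^ n"
  have P: "0 < P" by (simp add: P_def)
  have t: "0 \<le> real_of_int t" "real_of_int t \<le> side_real eps c n"
    using sides(2) by (simp_all add: t_def side_eq_floor)
  have s: "0 \<le> real_of_int s" "real_of_int s \<le> side_real eps c m"
    "side_real eps c m \<le> side_real eps c (n - 1)"
    using sides(1) eps c mn by (simp_all add: s_def side_eq_floor side_real_mono)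
  have X_lower: "P / 2 \<le> of_int X" unfolding X_def P_def using mn(2) by (rule horizontal_offset_ge)
  have Y_upper: "of_int Y + of_int s \<le> P / real n powr eps"
    using vertical_offset_le[of eps c m n] eps c mn by (simp add: Y_def s_def P_def)
  have Y_lower: "100 * side_real eps c (n - 1) + 101 * side_real eps c n \<le> of_int Y"
    unfolding Y_def using eps mn large by (intro vertical_offset_ge) auto
  have u: "side_real eps c n = P / (c * real n * real n powr eps)"
    using mn by (simp add: side_real_def P_def powr_add mult.assoc)
  have large': "100 * c \<le> real n powr eps" "side_real eps c (n - 1) \<le> 51 / 100 * side_real eps c n"
    "side_real eps c (n - 1) \<le> P / 200" "real n + 1 \<le> 101 / 100 * real n"
    using large by (simp_all add: large_scale_def P_def)
  have "0 < side_real eps c n" using c mn by (simp add: side_real_def)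
  moreover have "real_of_int ((2::int) ^ n) = P" by (simp add: P_def)
  ultimately have "real_of_int s < of_int X" "real_of_int t < of_int Y" "real_of_int s \<le> of_int ((2::int) ^ n)"
    using X_lower Y_lower s t large' P by linarith+
  then have "real (card (cross_triples eps c S m n))
      \<le> collinearity_bound (of_int s) (of_int t) (of_int X) (of_int Y) (real n)"
    unfolding s_def t_def X_def Y_def of_int_less_iff of_int_le_iff
    using sides slice by (intro card_cross_triples_le_collinearity_bound)
  also have "\<dots> \<le> 8 * side_real eps c n * side_real eps c m / (c * real n powr eps)"
    using collinearity_bound_le[of "of_int t" "side_real eps c n" "of_int s" "side_real eps c m"
        "side_real eps c (n - 1)" P "of_int X" "of_int Y" "real n powr eps" c "real n"]
      t s large' X_lower Y_upper Y_lower c mn u P by simp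
  finally show ?thesis .
qed

lemma bound_eq_side_real:
  fixes eps c :: real and m n :: nat
  assumes "0 < m" "0 < n" "0 < c"
  shows "8 * 2 ^ (m + n) / (c ^ 3 * real n powr (2 + 2 * eps) * real m powr (1 + eps)) * real n
    = 8 * side_real eps c n * side_real eps c m / (c * real n powr eps)"
proof -
  have n_1_eps: "real n powr (1 + eps) = real n * real n powr eps" using assms by (simp add: powr_add)
  have "real n powr (2 + 2 * eps) = real n powr (1 + eps) * real n powr (1 + eps)"
    by (simp flip: powr_add)
  then show ?thesis unfolding side_real_def n_1_eps
    using assms by (simp add: field_simps power_add power3_eq_cube)
qed


theorem lemma3p6:
  fixes eps c :: real
  assumes "0 < eps" "eps < 1" "c \<ge> 12 / eps"
  shows "\<exists>N0. \<forall>n0\<ge>N0. \<forall>S. construction eps c n0 S \<longrightarrow>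
           (\<exists>N. \<forall>m n. n0 \<le> m \<and> m < n \<and> N \<le> n \<longrightarrow>
              real (card (cross_triples eps c S m n))
                \<le> 8 * 2 ^ (m + n) / (c ^ 3 * real n powr (2 + 2 * eps) * real m powr (1 + eps))
                  * real n)"
proof -
  have "12 \<le> 12 / eps" using assms by (simp add: le_divide_eq)
  then have c: "12 \<le> c" using assms by linarith
  then have "0 < c" by simp
  obtain N0 where side_N0: "\<And>m. N0 \<le> m \<Longrightarrow> 4 \<le> side eps c m"
    using eventually_side_ge_4[OF assms(1,2) \<open>0 < c\<close>] unfolding eventually_at_top_linorder by blast
  obtain N1 where large_N1: "\<And>n. N1 \<le> n \<Longrightarrow> large_scale eps c n"
    using eventually_large_scale[OF assms(1,2) \<open>0 < c\<close>] unfolding eventually_at_top_linorder by blast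
  have "real (card (cross_triples eps c S m n))
          \<le> 8 * 2 ^ (m + n) / (c ^ 3 * real n powr (2 + 2 * eps) * real m powr (1 + eps)) * real n"
    if n0: "max N0 3 \<le> n0" and S: "construction eps c n0 S" and mn: "n0 \<le> m" "m < n" "N1 \<le> n"
    for n0 S m n
  proof -
    obtain a b where "S \<inter> Qlat eps c m \<subseteq> parab eps c m a b"
      using S mn(1) by (rule construction_slice_subset_parab)
    then have "real (card (cross_triples eps c S m n))
        \<le> 8 * side_real eps c n * side_real eps c m / (c * real n powr eps)"
      using assms c n0 mn side_N0[of m] side_N0[of n] large_N1 by (intro card_cross_triples_le) auto
    then show ?thesis using n0 mn \<open>0 < c\<close> by (subst bound_eq_side_real) auto
  qed
  then show ?thesis by blast
qed

end
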